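(* Let $G$ be a graph whose minimum degree is $3$. Then $\mu(G)\leq 3$.
   Context: Multi-graphs have no self-loops; the skeleton of a multi-graph is its underlying simple graph. Each edge $e$ between $u$ and $v$ consists of two half-edges $e_u$ and $e_v$. A half-edge colouring is a function $c$ from the set of half-edges to $\mathbb{N}_0$; each edge $e$ also gets a weight $w(e)\in\mathbb{C}$. The weight of a perfect matching $P$ is $\prod_{e\in P}w(e)$. A vertex colouring is a map $vc:V\to\mathbb{N}_0$; it filters out the subgraph consisting of all edges $e$ (between $u,v$) with $c(e_u)=vc(u)$ and $c(e_v)=vc(v)$ (with the same weights). The weight of $vc$ is the sum of the weights of all perfect matchings of this filtered subgraph; $vc$ is feasible if the filtered subgraph has at least one perfect matching (an infeasible colouring has weight $0$). An edge-coloured edge-weighted multi-graph is GHZ if every feasible monochromatic vertex colouring has weight $1$ and every non-monochromatic vertex colouring has weight $0$; its dimension is the number of feasible monochromatic vertex colourings. For a simple graph $G$, the matching index $\mu(G)$ is the maximum (possibly $\infty$) of the dimension over all GHZ edge-coloured edge-weighted multi-graphs whose skeleton is $G$. *)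

theory Defs
  imports Complex_Main "HOL-Library.Extended_Nat"
begin

definition simple_graph :: "'a set \<Rightarrow> 'a set set \<Rightarrow> bool" where
  "simple_graph V E \<longleftrightarrow> finite V \<and> (\<forall>x\<in>E. x \<subseteq> V \<and> card x = 2)"

definition degree :: "'a set set \<Rightarrow> 'a \<Rightarrow> nat" where
  "degree E v = card {x\<in>E. v \<in> x}"

definition min_degree :: "'a set \<Rightarrow> 'a set set \<Rightarrow> nat" where
  "min_degree V E = Min (degree E ` V)"

text \<open>Half-edge e_u is represented by the pair (e,u) with u in ends e.\<close>
definition multigraph_with_skeleton ::
  "'a set \<Rightarrow> 'a set set \<Rightarrow> 'e set \<Rightarrow> ('e \<Rightarrow> 'a set) \<Rightarrow> bool" where
  "multigraph_with_skeleton V E Ed ends \<longleftrightarrow>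
     finite Ed \<and> (\<forall>e\<in>Ed. ends e \<in> E) \<and> (\<forall>x\<in>E. \<exists>e\<in>Ed. ends e = x)"

text \<open>Subgraph filtered by vertex colouring vc, given half-edge colouring c (c e u = colour of e_u).\<close>
definition filtered :: "'e set \<Rightarrow> ('e \<Rightarrow> 'a set) \<Rightarrow> ('e \<Rightarrow> 'a \<Rightarrow> nat) \<Rightarrow> ('a \<Rightarrow> nat) \<Rightarrow> 'e set" where
  "filtered Ed ends c vc = {e\<in>Ed. \<forall>u\<in>ends e. c e u = vc u}"

definition perfect_matching :: "'a set \<Rightarrow> ('e \<Rightarrow> 'a set) \<Rightarrow> 'e set \<Rightarrow> 'e set \<Rightarrow> bool" where
  "perfect_matching V ends F P \<longleftrightarrow> P \<subseteq> F \<and> (\<forall>v\<in>V. \<exists>!e. e \<in> P \<and> v \<in> ends e)"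

definition vc_weight ::
  "'a set \<Rightarrow> 'e set \<Rightarrow> ('e \<Rightarrow> 'a set) \<Rightarrow> ('e \<Rightarrow> 'a \<Rightarrow> nat) \<Rightarrow> ('e \<Rightarrow> complex) \<Rightarrow> ('a \<Rightarrow> nat) \<Rightarrow> complex" where
  "vc_weight V Ed ends c w vc =
     (\<Sum>P\<in>{P. perfect_matching V ends (filtered Ed ends c vc) P}. \<Prod>e\<in>P. w e)"

definition feasible ::
  "'a set \<Rightarrow> 'e set \<Rightarrow> ('e \<Rightarrow> 'a set) \<Rightarrow> ('e \<Rightarrow> 'a \<Rightarrow> nat) \<Rightarrow> ('a \<Rightarrow> nat) \<Rightarrow> bool" where
  "feasible V Ed ends c vc \<longleftrightarrow> (\<exists>P. perfect_matching V ends (filtered Ed ends c vc) P)"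

definition monochromatic :: "'a set \<Rightarrow> ('a \<Rightarrow> nat) \<Rightarrow> bool" where
  "monochromatic V vc \<longleftrightarrow> (\<exists>k. \<forall>v\<in>V. vc v = k)"

definition is_GHZ ::
  "'a set \<Rightarrow> 'e set \<Rightarrow> ('e \<Rightarrow> 'a set) \<Rightarrow> ('e \<Rightarrow> 'a \<Rightarrow> nat) \<Rightarrow> ('e \<Rightarrow> complex) \<Rightarrow> bool" where
  "is_GHZ V Ed ends c w \<longleftrightarrow>
     (\<forall>vc. monochromatic V vc \<and> feasible V Ed ends c vc \<longrightarrow> vc_weight V Ed ends c w vc = 1) \<and>
     (\<forall>vc. \<not> monochromatic V vc \<longrightarrow> vc_weight V Ed ends c w vc = 0)"

text \<open>Dimension: number of feasible monochromatic vertex colourings (determined by the colour k).\<close>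
definition ghz_dim ::
  "'a set \<Rightarrow> 'e set \<Rightarrow> ('e \<Rightarrow> 'a set) \<Rightarrow> ('e \<Rightarrow> 'a \<Rightarrow> nat) \<Rightarrow> nat" where
  "ghz_dim V Ed ends c = card {k::nat. feasible V Ed ends c (\<lambda>_. k)}"

text \<open>Matching index (edge names taken from nat, which suffices for finite multi-graphs).\<close>
definition matching_index :: "'a set \<Rightarrow> 'a set set \<Rightarrow> enat" where
  "matching_index V E = Sup {enat (ghz_dim V Ed ends c) | (Ed :: nat set) ends c w.
      multigraph_with_skeleton V E Ed ends \<and> is_GHZ V Ed ends c w}"

end

theory Submission
  imports Defs "HOL-Library.FuncSet"
begin

text \<open>Let \<open>v\<close> be a vertex of degree 3 with neighbours \<open>a\<close>, \<open>b\<close>, \<open>d\<close>, and suppose four colours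
  are feasible. Grouping perfect matchings by the vertex colouring they induce, the GHZ conditions
  say that the perfect matchings colouring \<open>v, a, b, d\<close> with \<open>i, j, k, l\<close> have total weight
  \<open>\<delta>(i,j,k,l)\<close>. Sorting these matchings by the partner of \<open>v\<close> and splitting off the edge at \<open>v\<close>
  writes this Kronecker delta as \<open>A\<^sub>1(i,j) B\<^sub>1(k,l) + A\<^sub>2(i,k) B\<^sub>2(j,l) + A\<^sub>3(i,l) B\<^sub>3(j,k)\<close>.
  No such decomposition exists on four indices: a suitable contraction of \<open>i\<close> and \<open>l\<close> would
  turn it into a decomposition of the \<open>3 \<times> 3\<close> identity matrix as a matrix of rank at most two.\<close>

lemma rank_2_not_identity_3:
  fixes f g f' g' :: "'i \<Rightarrow> 'a::idom"
  assumes "p \<noteq> q" "q \<noteq> r" "p \<noteq> r"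
    and decomp: "\<And>j k. j \<in> {p,q,r} \<Longrightarrow> k \<in> {p,q,r} \<Longrightarrow>
      (if j = k then 1 else 0) = f j * g k + f' j * g' k"
  shows False
proof -
  define M where "M j k = f j * g k + f' j * g' k" for j k
  have "M p p * (M q q * M r r - M q r * M r q) - M p q * (M q p * M r r - M q r * M r p)
      + M p r * (M q p * M r q - M q q * M r p) = 0"
    unfolding M_def by algebra
  moreover have "M j k = (if j = k then 1 else 0)" if "j \<in> {p,q,r}" "k \<in> {p,q,r}" for j k
    using decomp[OF that] by (simp add: M_def)
  ultimately show False using assms(1-3) by simp
qed

lemma obtain_weights_annihilating:
  fixes \<alpha> :: "'i \<Rightarrow> 'a::field"
  assumes "finite S" "S \<noteq> {}"
  obtains j0 wt where "j0 \<in> S" "\<And>i. i \<in> S - {j0} \<Longrightarrow> wt i = 1" "(\<Sum>i\<in>S. wt i * \<alpha> i) = 0"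
proof (cases "\<exists>j0\<in>S. \<alpha> j0 \<noteq> 0")
  case True
  then obtain j0 where j0: "j0 \<in> S" "\<alpha> j0 \<noteq> 0" by blast
  define wt where "wt i = (if i = j0 then - (\<Sum>i\<in>S-{j0}. \<alpha> i) / \<alpha> j0 else 1)" for i
  have "(\<Sum>i\<in>S. wt i * \<alpha> i) = wt j0 * \<alpha> j0 + (\<Sum>i\<in>S-{j0}. wt i * \<alpha> i)"
    using assms(1) j0(1) by (simp add: sum.remove)
  also have "(\<Sum>i\<in>S-{j0}. wt i * \<alpha> i) = (\<Sum>i\<in>S-{j0}. \<alpha> i)"
    by (rule sum.cong) (auto simp: wt_def)
  finally have "(\<Sum>i\<in>S. wt i * \<alpha> i) = 0" using j0(2) by (simp add: wt_def)
  moreover have "wt i = 1" if "i \<in> S - {j0}" for i using that by (simp add: wt_def)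
  ultimately show ?thesis using that j0(1) by blast
next
  case False
  then show ?thesis using that[of _ "\<lambda>_. 1"] assms(2) by auto
qed

lemma delta4_not_sum_of_pairings:
  fixes A1 B1 A2 B2 A3 B3 :: "'i \<Rightarrow> 'i \<Rightarrow> 'a::field"
  assumes "finite S" "card S \<ge> 4"
    and decomp: "\<And>i j k l. i \<in> S \<Longrightarrow> j \<in> S \<Longrightarrow> k \<in> S \<Longrightarrow> l \<in> S \<Longrightarrow>
      (if i = j \<and> j = k \<and> k = l then 1 else 0) = A1 i j * B1 k l + A2 i k * B2 j l + A3 i l * B3 j k"
  shows False
proof -
  have "S \<noteq> {}" using assms(2) by auto
  then obtain j0 wt where j0: "j0 \<in> S" and wt1: "\<And>i. i \<in> S - {j0} \<Longrightarrow> wt i = 1"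
    and wt_annihilates: "(\<Sum>i\<in>S. wt i * (\<Sum>l\<in>S. A3 i l)) = 0"
    using obtain_weights_annihilating[OF assms(1), of "\<lambda>i. \<Sum>l\<in>S. A3 i l"] by blast
  have "3 \<le> card (S - {j0})" using assms(1,2) j0 by simp
  then obtain T where "T \<subseteq> S - {j0}" "card T = 3" by (meson obtain_subset_with_card_n)
  then obtain p q r where pqr: "{p,q,r} \<subseteq> S - {j0}" "p \<noteq> q" "q \<noteq> r" "p \<noteq> r"
    by (auto simp: card_3_iff)
  have "(if j = k then 1 else 0) = (\<Sum>i\<in>S. wt i * A1 i j) * (\<Sum>l\<in>S. B1 k l)
      + (\<Sum>l\<in>S. B2 j l) * (\<Sum>i\<in>S. wt i * A2 i k)" if jk: "j \<in> {p,q,r}" "k \<in> {p,q,r}" for j k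
  proof -
    have jS: "j \<in> S - {j0}" and kS: "k \<in> S - {j0}" using jk pqr by auto
    have "(\<Sum>i\<in>S. \<Sum>l\<in>S. wt i * (if i = j \<and> j = k \<and> k = l then 1 else 0))
        = (\<Sum>i\<in>S. if i = j \<and> j = k then wt i else 0)"
      using assms(1) kS by (intro sum.cong refl) (auto simp: sum_distrib_left[symmetric])
    also have "\<dots> = (if j = k then wt j else 0)" using assms(1) jS by (cases "j = k") auto
    also have "\<dots> = (if j = k then 1 else 0)" using wt1[OF jS] by auto
    finally have "(if j = k then 1 else 0)
        = (\<Sum>i\<in>S. \<Sum>l\<in>S. wt i * (if i = j \<and> j = k \<and> k = l then 1 else 0))" ..
    also have "\<dots> = (\<Sum>i\<in>S. \<Sum>l\<in>S. wt i * (A1 i j * B1 k l + A2 i k * B2 j l + A3 i l * B3 j k))"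
      using decomp jS kS by (intro sum.cong refl) auto
    also have "\<dots> = (\<Sum>i\<in>S. wt i * A1 i j) * (\<Sum>l\<in>S. B1 k l)
        + (\<Sum>l\<in>S. B2 j l) * (\<Sum>i\<in>S. wt i * A2 i k) + (\<Sum>i\<in>S. wt i * (\<Sum>l\<in>S. A3 i l)) * B3 j k"
      by (simp add: sum_distrib_left sum_distrib_right sum.distrib algebra_simps)
    finally show ?thesis using wt_annihilates by simp
  qed
  then show False
    by (rule rank_2_not_identity_3[OF pqr(2-4), of "\<lambda>j. \<Sum>i\<in>S. wt i * A1 i j" "\<lambda>k. \<Sum>l\<in>S. B1 k l"
          "\<lambda>j. \<Sum>l\<in>S. B2 j l" "\<lambda>k. \<Sum>i\<in>S. wt i * A2 i k"])
qed

locale multigraph =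
  fixes V :: "'a set" and Ed :: "'e set" and ends :: "'e \<Rightarrow> 'a set"
    and c :: "'e \<Rightarrow> 'a \<Rightarrow> nat" and w :: "'e \<Rightarrow> complex"
  assumes finite_edges: "finite Ed" and ends_subset: "e \<in> Ed \<Longrightarrow> ends e \<subseteq> V"
begin

definition edges_within :: "'a set \<Rightarrow> 'e set" where
  "edges_within U = {e \<in> Ed. ends e \<subseteq> U}"

definition perfect_matchings :: "'a set \<Rightarrow> 'e set set" where
  "perfect_matchings U = {P. perfect_matching U ends (edges_within U) P}"

definition matching_colour :: "'e set \<Rightarrow> 'a \<Rightarrow> nat" where
  "matching_colour P u = c (THE e. e \<in> P \<and> u \<in> ends e) u"

lemma perfect_matchingsI:
  assumes "P \<subseteq> Ed" "\<And>e. e \<in> P \<Longrightarrow> ends e \<subseteq> U" "\<And>u. u \<in> U \<Longrightarrow> \<exists>e\<in>P. u \<in> ends e"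
    "\<And>u e e'. u \<in> U \<Longrightarrow> e \<in> P \<Longrightarrow> e' \<in> P \<Longrightarrow> u \<in> ends e \<Longrightarrow> u \<in> ends e' \<Longrightarrow> e = e'"
  shows "P \<in> perfect_matchings U"
  using assms unfolding perfect_matchings_def perfect_matching_def edges_within_def by blast

context
  fixes P U assumes P: "P \<in> perfect_matchings U"
begin

lemma perfect_matchings_subset: "P \<subseteq> Ed"
  using P by (auto simp: perfect_matchings_def perfect_matching_def edges_within_def)

lemma perfect_matchings_ends: "e \<in> P \<Longrightarrow> ends e \<subseteq> U"
  using P by (auto simp: perfect_matchings_def perfect_matching_def edges_within_def)

lemma perfect_matchings_cover: "u \<in> U \<Longrightarrow> \<exists>e\<in>P. u \<in> ends e"
  using P by (auto simp: perfect_matchings_def perfect_matching_def)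

lemma perfect_matchings_unique:
  "u \<in> U \<Longrightarrow> e \<in> P \<Longrightarrow> e' \<in> P \<Longrightarrow> u \<in> ends e \<Longrightarrow> u \<in> ends e' \<Longrightarrow> e = e'"
  using P unfolding perfect_matchings_def perfect_matching_def by blast

lemma matching_colour_eq: "u \<in> U \<Longrightarrow> e \<in> P \<Longrightarrow> u \<in> ends e \<Longrightarrow> matching_colour P u = c e u"
  unfolding matching_colour_def using perfect_matchings_unique
  by (metis (no_types, lifting) the_equality)

end

lemma finite_perfect_matchings: "finite (perfect_matchings U)"
  by (rule finite_subset[of _ "Pow Ed"]) (auto dest: perfect_matchings_subset simp: finite_edges)

lemma insert_perfect_matching:
  assumes e: "e \<in> Ed" "ends e = {v,x}" "v \<in> U" "x \<in> U" and P: "P \<in> perfect_matchings (U - {v,x})"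
  shows "insert e P \<in> perfect_matchings U"
proof (rule perfect_matchingsI)
  show "insert e P \<subseteq> Ed" using e perfect_matchings_subset[OF P] by auto
  show "ends f \<subseteq> U" if "f \<in> insert e P" for f using that e perfect_matchings_ends[OF P] by auto
  show "\<exists>f\<in>insert e P. u \<in> ends f" if "u \<in> U" for u
    using perfect_matchings_cover[OF P, of u] that e by auto
  show "f = f'" if "u \<in> U" "f \<in> insert e P" "f' \<in> insert e P" "u \<in> ends f" "u \<in> ends f'" for u f f'
    using that perfect_matchings_ends[OF P] perfect_matchings_unique[OF P, of u] e by blast
qed

lemma matching_colour_insert:
  assumes e: "e \<in> Ed" "ends e = {v,x}" "v \<in> U" "x \<in> U" and P: "P \<in> perfect_matchings (U - {v,x})"
    and u: "u \<in> U"
  shows "matching_colour (insert e P) u = (if u \<in> {v,x} then c e u else matching_colour P u)"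
proof (cases "u \<in> {v,x}")
  case True
  then show ?thesis using matching_colour_eq[OF insert_perfect_matching[OF e P] u, of e] e by auto
next
  case False
  then obtain f where "f \<in> P" "u \<in> ends f" using perfect_matchings_cover[OF P, of u] u by auto
  then show ?thesis
    using matching_colour_eq[OF insert_perfect_matching[OF e P] u, of f]
      matching_colour_eq[OF P, of u f] u False by auto
qed

lemma remove_perfect_matching:
  assumes Q: "Q \<in> perfect_matchings U" and e: "e \<in> Q" "ends e = {v,x}" "v \<in> U" "x \<in> U"
  shows "Q - {e} \<in> perfect_matchings (U - {v,x})"
proof (rule perfect_matchingsI)
  show "Q - {e} \<subseteq> Ed" using perfect_matchings_subset[OF Q] by auto
  show "ends f \<subseteq> U - {v,x}" if "f \<in> Q - {e}" for f
    using that e perfect_matchings_ends[OF Q, of f] perfect_matchings_unique[OF Q, of _ e f] by blast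
  show "\<exists>f\<in>Q - {e}. u \<in> ends f" if "u \<in> U - {v,x}" for u
    using perfect_matchings_cover[OF Q, of u] that e by auto
  show "f = f'" if "u \<in> U - {v,x}" "f \<in> Q - {e}" "f' \<in> Q - {e}" "u \<in> ends f" "u \<in> ends f'" for u f f'
    using that perfect_matchings_unique[OF Q, of u f f'] by auto
qed

lemma matching_colour_remove:
  assumes Q: "Q \<in> perfect_matchings U" and e: "e \<in> Q" "ends e = {v,x}" "v \<in> U" "x \<in> U"
    and u: "u \<in> U - {v,x}"
  shows "matching_colour (Q - {e}) u = matching_colour Q u"
proof -
  obtain f where f: "f \<in> Q" "u \<in> ends f" using perfect_matchings_cover[OF Q, of u] u by auto
  then have "f \<noteq> e" using e u by auto
  then show ?thesis
    using matching_colour_eq[OF remove_perfect_matching[OF Q e] u, of f] matching_colour_eq[OF Q _ f] f u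
    by auto
qed

lemma perfect_matching_filtered_iff:
  "perfect_matching V ends (filtered Ed ends c vc) P \<longleftrightarrow>
     P \<in> perfect_matchings V \<and> (\<forall>u\<in>V. matching_colour P u = vc u)"
proof
  assume pm: "perfect_matching V ends (filtered Ed ends c vc) P"
  then have P: "P \<in> perfect_matchings V"
    using ends_subset
    by (auto simp: perfect_matchings_def perfect_matching_def edges_within_def filtered_def)
  have "matching_colour P u = vc u" if u: "u \<in> V" for u
  proof -
    obtain e where "e \<in> P" "u \<in> ends e" using perfect_matchings_cover[OF P u] by blast
    then show ?thesis
      using matching_colour_eq[OF P u] pm by (auto simp: perfect_matching_def filtered_def)
  qed
  with P show "P \<in> perfect_matchings V \<and> (\<forall>u\<in>V. matching_colour P u = vc u)" by blast
next
  assume "P \<in> perfect_matchings V \<and> (\<forall>u\<in>V. matching_colour P u = vc u)"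
  then have P: "P \<in> perfect_matchings V" and col: "\<forall>u\<in>V. matching_colour P u = vc u" by auto
  have "P \<subseteq> filtered Ed ends c vc"
    using perfect_matchings_subset[OF P] perfect_matchings_ends[OF P] matching_colour_eq[OF P] col
    by (fastforce simp: filtered_def)
  then show "perfect_matching V ends (filtered Ed ends c vc) P"
    using P by (simp add: perfect_matchings_def perfect_matching_def)
qed

lemma vc_weight_eq_sum_perfect_matchings:
  "vc_weight V Ed ends c w vc =
     (\<Sum>P | P \<in> perfect_matchings V \<and> (\<forall>u\<in>V. matching_colour P u = vc u). prod w P)"
  by (simp add: vc_weight_def perfect_matching_filtered_iff)

lemma feasible_iff_perfect_matching:
  "feasible V Ed ends c vc \<longleftrightarrow> (\<exists>P\<in>perfect_matchings V. \<forall>u\<in>V. matching_colour P u = vc u)"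
  by (auto simp: feasible_def perfect_matching_filtered_iff)

lemma feasible_cong:
  "(\<And>u. u \<in> V \<Longrightarrow> vc u = vc' u) \<Longrightarrow> feasible V Ed ends c vc \<longleftrightarrow> feasible V Ed ends c vc'"
  by (simp add: feasible_iff_perfect_matching)

lemma GHZ_vc_weight:
  assumes "is_GHZ V Ed ends c w"
  shows "vc_weight V Ed ends c w vc =
    (if monochromatic V vc \<and> feasible V Ed ends c vc then 1 else 0)"
proof (cases "feasible V Ed ends c vc")
  case False
  then have "{P. perfect_matching V ends (filtered Ed ends c vc) P} = {}" by (auto simp: feasible_def)
  then show ?thesis using False by (simp add: vc_weight_def)
qed (use assms in \<open>auto simp: is_GHZ_def\<close>)

definition colouring_of :: "'e set \<Rightarrow> 'a \<Rightarrow> nat" where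
  "colouring_of P = restrict (matching_colour P) V"

lemma colouring_of_eq_iff:
  "vc \<in> extensional V \<Longrightarrow> colouring_of P = vc \<longleftrightarrow> (\<forall>u\<in>V. matching_colour P u = vc u)"
  by (auto simp: colouring_of_def restrict_def extensional_def fun_eq_iff)

lemma sum_perfect_matchings_by_colouring:
  fixes t :: "'a \<Rightarrow> nat"
  assumes "W \<subseteq> V"
  defines "X \<equiv> {P. P \<in> perfect_matchings V \<and> (\<forall>u\<in>W. matching_colour P u = t u)}"
  shows "sum (prod w) X = (\<Sum>vc\<in>colouring_of ` X. vc_weight V Ed ends c w vc)"
proof -
  have fibre: "{P \<in> X. colouring_of P = vc} =
      {P. P \<in> perfect_matchings V \<and> (\<forall>u\<in>V. matching_colour P u = vc u)}"
    if "vc \<in> colouring_of ` X" for vc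
  proof -
    have "vc \<in> extensional V" "\<forall>u\<in>W. vc u = t u"
      using that assms(1) by (auto simp: X_def colouring_of_def)
    then show ?thesis using colouring_of_eq_iff assms(1) by (auto simp: X_def)
  qed
  have "finite X" unfolding X_def by (auto intro: finite_subset[OF _ finite_perfect_matchings])
  then have "sum (prod w) X = (\<Sum>vc\<in>colouring_of ` X. sum (prod w) {P \<in> X. colouring_of P = vc})"
    by (intro sum.group[symmetric]) auto
  also have "\<dots> = (\<Sum>vc\<in>colouring_of ` X. vc_weight V Ed ends c w vc)"
    unfolding vc_weight_eq_sum_perfect_matchings by (rule sum.cong[OF refl], subst fibre) auto
  finally show ?thesis .
qed

lemma monochromatic_feasible_colourings:
  fixes t :: "'a \<Rightarrow> nat"
  assumes "W \<subseteq> V"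
  defines "X \<equiv> {P. P \<in> perfect_matchings V \<and> (\<forall>u\<in>W. matching_colour P u = t u)}"
  shows "{vc \<in> colouring_of ` X. monochromatic V vc \<and> feasible V Ed ends c vc} =
    (\<lambda>m. restrict (\<lambda>_. m) V) ` {m. feasible V Ed ends c (\<lambda>_. m) \<and> (\<forall>u\<in>W. t u = m)}"
proof (intro equalityI subsetI)
  fix vc assume "vc \<in> {vc \<in> colouring_of ` X. monochromatic V vc \<and> feasible V Ed ends c vc}"
  then obtain P m where P: "P \<in> X" "vc = colouring_of P" and m: "\<forall>u\<in>V. vc u = m"
    and "feasible V Ed ends c vc"
    by (auto simp: monochromatic_def)
  then have "feasible V Ed ends c (\<lambda>_. m)" using feasible_cong[of vc "\<lambda>_. m"] by simp
  moreover have "\<forall>u\<in>W. t u = m" using P m assms(1) by (force simp: X_def colouring_of_def)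
  moreover have "vc = restrict (\<lambda>_. m) V" using P(2) m by (auto simp: colouring_of_def fun_eq_iff)
  ultimately show "vc \<in> (\<lambda>m. restrict (\<lambda>_. m) V) ` {m. feasible V Ed ends c (\<lambda>_. m) \<and> (\<forall>u\<in>W. t u = m)}"
    by blast
next
  fix vc assume "vc \<in> (\<lambda>m. restrict (\<lambda>_. m) V) ` {m. feasible V Ed ends c (\<lambda>_. m) \<and> (\<forall>u\<in>W. t u = m)}"
  then obtain m where vc: "vc = restrict (\<lambda>_. m) V" and m: "feasible V Ed ends c (\<lambda>_. m)" "\<forall>u\<in>W. t u = m"
    by blast
  obtain P where P: "P \<in> perfect_matchings V" "\<forall>u\<in>V. matching_colour P u = m"
    using m(1) by (auto simp: feasible_iff_perfect_matching)
  then have "P \<in> X" using m(2) assms(1) by (auto simp: X_def)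
  moreover have "colouring_of P = vc" using P(2) vc by (simp add: colouring_of_eq_iff)
  ultimately have "vc \<in> colouring_of ` X" by blast
  moreover have "feasible V Ed ends c vc" using m(1) feasible_cong[of vc "\<lambda>_. m"] vc by simp
  ultimately show "vc \<in> {vc \<in> colouring_of ` X. monochromatic V vc \<and> feasible V Ed ends c vc}"
    using vc by (auto simp: monochromatic_def)
qed

lemma GHZ_sum_perfect_matchings:
  assumes ghz: "is_GHZ V Ed ends c w" and "W \<subseteq> V" "V \<noteq> {}"
  shows "(\<Sum>P | P \<in> perfect_matchings V \<and> (\<forall>u\<in>W. matching_colour P u = t u). prod w P) =
    of_nat (card {m. feasible V Ed ends c (\<lambda>_. m) \<and> (\<forall>u\<in>W. t u = m)})"
proof -
  let ?X = "{P. P \<in> perfect_matchings V \<and> (\<forall>u\<in>W. matching_colour P u = t u)}"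
  have "finite (colouring_of ` ?X)" by (auto intro: finite_subset[OF _ finite_perfect_matchings])
  have "inj (\<lambda>m. restrict (\<lambda>_. m :: nat) V)" using \<open>V \<noteq> {}\<close> by (auto simp: inj_def fun_eq_iff)
  have "sum (prod w) ?X = (\<Sum>vc\<in>colouring_of ` ?X. vc_weight V Ed ends c w vc)"
    using sum_perfect_matchings_by_colouring[OF \<open>W \<subseteq> V\<close>] .
  also have "\<dots> = (\<Sum>vc\<in>colouring_of ` ?X. if monochromatic V vc \<and> feasible V Ed ends c vc then 1 else 0)"
    by (simp add: GHZ_vc_weight[OF ghz])
  also have "\<dots> = of_nat (card {vc \<in> colouring_of ` ?X. monochromatic V vc \<and> feasible V Ed ends c vc})"
    using \<open>finite (colouring_of ` ?X)\<close> by (simp add: sum.inter_filter[symmetric])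
  also have "\<dots> = of_nat (card {m. feasible V Ed ends c (\<lambda>_. m) \<and> (\<forall>u\<in>W. t u = m)})"
    unfolding monochromatic_feasible_colourings[OF \<open>W \<subseteq> V\<close>]
    using \<open>inj (\<lambda>m. restrict (\<lambda>_. m) V)\<close> by (simp add: card_image inj_on_subset)
  finally show ?thesis .
qed

lemma sum_perfect_matchings_split_at_vertex:
  assumes v: "v \<in> U" and N: "finite N" "v \<notin> N"
    and edges_at_v: "\<And>e. e \<in> Ed \<Longrightarrow> v \<in> ends e \<Longrightarrow> \<exists>x\<in>N. ends e = {v,x}"
    and X: "X \<subseteq> perfect_matchings U"
  shows "sum f X = (\<Sum>x\<in>N. sum f {P \<in> X. \<exists>e\<in>P. ends e = {v,x}})"
proof -
  let ?X = "\<lambda>x. {P \<in> X. \<exists>e\<in>P. ends e = {v,x}}"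
  have "X \<subseteq> (\<Union>x\<in>N. ?X x)"
  proof
    fix P assume P: "P \<in> X"
    obtain e where e: "e \<in> P" "v \<in> ends e"
      using perfect_matchings_cover[OF subsetD[OF X P] v] by blast
    then have "e \<in> Ed" using perfect_matchings_subset[OF subsetD[OF X P]] by blast
    then obtain x where "x \<in> N" "ends e = {v,x}" using edges_at_v e(2) by blast
    then show "P \<in> (\<Union>x\<in>N. ?X x)" using P e(1) by blast
  qed
  then have "X = (\<Union>x\<in>N. ?X x)" by blast
  then have "sum f X = sum f (\<Union>x\<in>N. ?X x)" by simp
  also have "\<dots> = (\<Sum>x\<in>N. sum f (?X x))"
  proof (rule sum.UNION_disjoint[OF N(1)])
    have "finite X" using X finite_perfect_matchings finite_subset by blast
    then show "\<forall>x\<in>N. finite (?X x)" by simp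
    show "\<forall>x\<in>N. \<forall>y\<in>N. x \<noteq> y \<longrightarrow> ?X x \<inter> ?X y = {}"
    proof (intro ballI impI equals0I)
      fix x y P assume xy: "x \<in> N" "y \<in> N" "x \<noteq> y" and "P \<in> ?X x \<inter> ?X y"
      then obtain e e' where P: "P \<in> X" and e: "e \<in> P" "ends e = {v,x}" "e' \<in> P" "ends e' = {v,y}"
        by blast
      then have "e = e'" using perfect_matchings_unique[OF subsetD[OF X P] v e(1) e(3)] by simp
      then show False using e xy N(2) by (auto simp: doubleton_eq_iff)
    qed
  qed
  finally show ?thesis .
qed

definition edge_weight :: "'a \<Rightarrow> 'a \<Rightarrow> nat \<Rightarrow> nat \<Rightarrow> complex" where
  "edge_weight v x i j = (\<Sum>e | e \<in> Ed \<and> ends e = {v,x} \<and> c e v = i \<and> c e x = j. w e)"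

lemma sum_perfect_matchings_through_edge:
  assumes v: "v \<in> U" and x: "x \<in> U" "v \<noteq> x" and W: "W \<subseteq> U - {v,x}"
  shows "(\<Sum>P | P \<in> perfect_matchings U \<and> (\<exists>e\<in>P. ends e = {v,x}) \<and>
            matching_colour P v = i \<and> matching_colour P x = j \<and> (\<forall>u\<in>W. matching_colour P u = t u).
            prod w P)
    = edge_weight v x i j *
      (\<Sum>P | P \<in> perfect_matchings (U - {v,x}) \<and> (\<forall>u\<in>W. matching_colour P u = t u). prod w P)"
    (is "sum _ ?L = _ * sum _ ?R")
proof -
  let ?E = "{e \<in> Ed. ends e = {v,x} \<and> c e v = i \<and> c e x = j}"
  define edge_of where "edge_of Q = (THE e. e \<in> Q \<and> ends e = {v,x})" for Q
  have edge_of: "edge_of Q \<in> Q \<and> ends (edge_of Q) = {v,x}"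
    if "Q \<in> perfect_matchings U" "\<exists>e\<in>Q. ends e = {v,x}" for Q
    unfolding edge_of_def
    by (rule theI') (use that perfect_matchings_unique[OF that(1) v] in blast)
  have "sum w ?E * sum (prod w) ?R = (\<Sum>(e,P)\<in>?E \<times> ?R. w e * prod w P)"
    by (simp add: sum_product sum.cartesian_product)
  also have "\<dots> = sum (prod w) ?L"
  proof (rule sum.reindex_bij_witness[where j = "\<lambda>(e,P). insert e P" and i = "\<lambda>Q. (edge_of Q, Q - {edge_of Q})"])
    fix eP assume "eP \<in> ?E \<times> ?R"
    then obtain e P where eP: "eP = (e,P)" "e \<in> ?E" "P \<in> ?R" by auto
    have P: "P \<in> perfect_matchings (U - {v,x})" and e: "e \<in> Ed" "ends e = {v,x}" "v \<in> U" "x \<in> U"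
      using eP v x by auto
    have e_notin: "e \<notin> P" using perfect_matchings_ends[OF P, of e] e by auto
    have Q: "insert e P \<in> perfect_matchings U" using insert_perfect_matching[OF e P] .
    have "edge_of (insert e P) = e" using edge_of[OF Q] e perfect_matchings_ends[OF P] by auto
    then show "(\<lambda>Q. (edge_of Q, Q - {edge_of Q})) ((\<lambda>(e,P). insert e P) eP) = eP"
      using eP(1) e_notin by auto
    show "(\<lambda>(e,P). insert e P) eP \<in> ?L"
      using eP Q matching_colour_insert[OF e P] v x subsetD[OF W] by auto
    show "prod w ((\<lambda>(e,P). insert e P) eP) = (\<lambda>(e,P). w e * prod w P) eP"
      using eP(1) e_notin finite_subset[OF perfect_matchings_subset[OF P] finite_edges] by simp
  next
    fix Q assume L: "Q \<in> ?L"
    then have Q: "Q \<in> perfect_matchings U" by simp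
    have e: "edge_of Q \<in> Q" "ends (edge_of Q) = {v,x}" using edge_of[OF Q] L by auto
    show "(\<lambda>(e,P). insert e P) ((\<lambda>Q. (edge_of Q, Q - {edge_of Q})) Q) = Q" using e by auto
    have "c (edge_of Q) v = i" "c (edge_of Q) x = j"
      using L matching_colour_eq[OF Q v e(1)] matching_colour_eq[OF Q x(1) e(1)] e(2) by auto
    then have "edge_of Q \<in> ?E" using e perfect_matchings_subset[OF Q] by auto
    moreover have "matching_colour (Q - {edge_of Q}) u = t u" if "u \<in> W" for u
    proof -
      have "u \<in> U - {v,x}" using that W by blast
      then show ?thesis using L that matching_colour_remove[OF Q e v x(1)] by simp
    qed
    then have "Q - {edge_of Q} \<in> ?R" using remove_perfect_matching[OF Q e v x(1)] by simp
    ultimately show "(\<lambda>Q. (edge_of Q, Q - {edge_of Q})) Q \<in> ?E \<times> ?R" by simp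
  qed
  finally show ?thesis by (simp add: edge_weight_def)
qed

definition matching_weight :: "'a set \<Rightarrow> 'a \<Rightarrow> 'a \<Rightarrow> nat \<Rightarrow> nat \<Rightarrow> complex" where
  "matching_weight U y z k l =
    (\<Sum>P | P \<in> perfect_matchings U \<and> matching_colour P y = k \<and> matching_colour P z = l. prod w P)"

lemma GHZ_delta_decomposition:
  assumes ghz: "is_GHZ V Ed ends c w"
    and vertices: "v \<in> V" "a \<in> V" "b \<in> V" "d \<in> V" and distinct: "distinct [v, a, b, d]"
    and edges_at_v: "\<And>e. e \<in> Ed \<Longrightarrow> v \<in> ends e \<Longrightarrow> ends e \<in> {{v,a}, {v,b}, {v,d}}"
    and i: "feasible V Ed ends c (\<lambda>_. i)"
  shows "(if i = j \<and> j = k \<and> k = l then 1 else 0) =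
      edge_weight v a i j * matching_weight (V - {v,a}) b d k l
    + edge_weight v b i k * matching_weight (V - {v,b}) a d j l
    + edge_weight v d i l * matching_weight (V - {v,d}) a b j k"
proof -
  define t where "t u = (if u = v then i else if u = a then j else if u = b then k else l)" for u
  let ?X = "{P. P \<in> perfect_matchings V \<and> (\<forall>u\<in>{v,a,b,d}. matching_colour P u = t u)}"
  have through: "sum (prod w) {P \<in> ?X. \<exists>e\<in>P. ends e = {v,x}} =
      edge_weight v x (t v) (t x) * matching_weight (V - {v,x}) y z (t y) (t z)"
    if xyz: "distinct [v, x, y, z]" "{v,x,y,z} = {v,a,b,d}" for x y z
  proof -
    have "{v,x,y,z} \<subseteq> V" using xyz(2) vertices by simp
    then have xyz_V: "x \<in> V" "y \<in> V" "z \<in> V" by simp_all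
    have "{P \<in> ?X. \<exists>e\<in>P. ends e = {v,x}} = {P. P \<in> perfect_matchings V \<and> (\<exists>e\<in>P. ends e = {v,x}) \<and>
        matching_colour P v = t v \<and> matching_colour P x = t x \<and> (\<forall>u\<in>{y,z}. matching_colour P u = t u)}"
      unfolding xyz(2)[symmetric] by auto
    also have "sum (prod w) \<dots> = edge_weight v x (t v) (t x) *
        (\<Sum>P | P \<in> perfect_matchings (V - {v,x}) \<and> (\<forall>u\<in>{y,z}. matching_colour P u = t u). prod w P)"
      using xyz xyz_V vertices(1) by (intro sum_perfect_matchings_through_edge) auto
    finally show ?thesis by (simp add: matching_weight_def)
  qed
  have "sum (prod w) ?X = of_nat (card {m. feasible V Ed ends c (\<lambda>_. m) \<and> (\<forall>u\<in>{v,a,b,d}. t u = m)})"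
    by (rule GHZ_sum_perfect_matchings[OF ghz]) (use vertices in auto)
  also have "{m. feasible V Ed ends c (\<lambda>_. m) \<and> (\<forall>u\<in>{v,a,b,d}. t u = m)} =
      (if i = j \<and> j = k \<and> k = l then {i} else {})"
    using i distinct by (auto simp: t_def)
  finally have delta: "sum (prod w) ?X = (if i = j \<and> j = k \<and> k = l then 1 else 0)" by simp
  have "sum (prod w) ?X = (\<Sum>x\<in>{a,b,d}. sum (prod w) {P \<in> ?X. \<exists>e\<in>P. ends e = {v,x}})"
  proof (rule sum_perfect_matchings_split_at_vertex)
    show "\<exists>x\<in>{a,b,d}. ends e = {v,x}" if "e \<in> Ed" "v \<in> ends e" for e
      using edges_at_v[OF that] by blast
  qed (use vertices(1) distinct in auto)
  also have "\<dots> = edge_weight v a i j * matching_weight (V - {v,a}) b d k l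
    + edge_weight v b i k * matching_weight (V - {v,b}) a d j l
    + edge_weight v d i l * matching_weight (V - {v,d}) a b j k"
  proof -
    have reordered: "distinct [v,b,a,d]" "{v,b,a,d} = {v,a,b,d}" "distinct [v,d,a,b]" "{v,d,a,b} = {v,a,b,d}"
      using distinct by auto
    note through[OF distinct refl] through[OF reordered(1,2)] through[OF reordered(3,4)]
    moreover have "t v = i" "t a = j" "t b = k" "t d = l" using distinct by (auto simp: t_def)
    ultimately show ?thesis using distinct by simp
  qed
  finally show ?thesis using delta by simp
qed

lemma GHZ_dim_le_3_at_vertex_of_degree_3:
  assumes ghz: "is_GHZ V Ed ends c w"
    and vertices: "v \<in> V" "a \<in> V" "b \<in> V" "d \<in> V" and distinct: "distinct [v, a, b, d]"
    and edges_at_v: "\<And>e. e \<in> Ed \<Longrightarrow> v \<in> ends e \<Longrightarrow> ends e \<in> {{v,a}, {v,b}, {v,d}}"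
  shows "ghz_dim V Ed ends c \<le> 3"
proof (rule ccontr)
  assume "\<not> ghz_dim V Ed ends c \<le> 3"
  then have "4 \<le> card {k. feasible V Ed ends c (\<lambda>_. k)}" by (simp add: ghz_dim_def)
  then obtain S where S: "S \<subseteq> {k. feasible V Ed ends c (\<lambda>_. k)}" "card S = 4"
    using obtain_subset_with_card_n by blast
  show False
  proof (rule delta4_not_sum_of_pairings[of S "edge_weight v a" "matching_weight (V - {v,a}) b d"
        "edge_weight v b" "matching_weight (V - {v,b}) a d" "edge_weight v d" "matching_weight (V - {v,d}) a b"])
    show "finite S" "4 \<le> card S" using S(2) card_ge_0_finite[of S] by simp_all
  qed (use GHZ_delta_decomposition[OF ghz vertices distinct edges_at_v] S(1) in blast)
qed

end

lemma multigraph_of_skeleton: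
  assumes "simple_graph V E" "multigraph_with_skeleton V E Ed ends"
  shows "multigraph V Ed ends"
  using assms by unfold_locales (auto simp: simple_graph_def multigraph_with_skeleton_def)

lemma simple_graph_neighbours_of_degree_3:
  assumes G: "simple_graph V E" and v: "degree E v = 3"
  obtains a b d where "distinct [v, a, b, d]" "a \<in> V" "b \<in> V" "d \<in> V"
    "{x \<in> E. v \<in> x} = {{v,a}, {v,b}, {v,d}}"
proof -
  have other_end: "\<exists>u\<in>V. u \<noteq> v \<and> X = {v,u}" if "X \<in> E" "v \<in> X" for X
  proof -
    have "X \<subseteq> V" "card X = 2" using G that(1) by (auto simp: simple_graph_def)
    then obtain p q where "X = {p,q}" "p \<noteq> q" by (auto simp: card_2_iff)
    then show ?thesis using \<open>X \<subseteq> V\<close> that(2) by auto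
  qed
  obtain X1 X2 X3 where X: "{x \<in> E. v \<in> x} = {X1,X2,X3}" "X1 \<noteq> X2" "X2 \<noteq> X3" "X1 \<noteq> X3"
    using v by (auto simp: degree_def card_3_iff)
  have "X1 \<in> {x \<in> E. v \<in> x}" "X2 \<in> {x \<in> E. v \<in> x}" "X3 \<in> {x \<in> E. v \<in> x}"
    unfolding X(1) by simp_all
  then obtain a b d where a: "a \<in> V" "a \<noteq> v" "X1 = {v,a}" and b: "b \<in> V" "b \<noteq> v" "X2 = {v,b}"
      and d: "d \<in> V" "d \<noteq> v" "X3 = {v,d}"
    using other_end by (metis mem_Collect_eq)
  have "a \<noteq> b" "b \<noteq> d" "a \<noteq> d" using X(2-4) a(3) b(3) d(3) by auto
  then show ?thesis using a b d X(1) by (intro that) auto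
qed

theorem theorem6:
  fixes V :: "'a set" and E :: "'a set set"
  assumes "simple_graph V E"
    and "V \<noteq> {}"
    and "min_degree V E = 3"
  shows "matching_index V E \<le> 3"
proof -
  have "finite V" using assms(1) by (simp add: simple_graph_def)
  then have "min_degree V E \<in> degree E ` V" using assms(2) by (simp add: min_degree_def)
  then obtain v where v: "v \<in> V" "degree E v = 3" using assms(3) by auto
  then obtain a b d where abd: "distinct [v, a, b, d]" "a \<in> V" "b \<in> V" "d \<in> V"
      and edges_at_v: "{x \<in> E. v \<in> x} = {{v,a}, {v,b}, {v,d}}"
    using simple_graph_neighbours_of_degree_3[OF assms(1) v(2)] by blast
  have "ghz_dim V Ed ends c \<le> 3"
    if skeleton: "multigraph_with_skeleton V E Ed ends" and ghz: "is_GHZ V Ed ends c w"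
    for Ed :: "nat set" and ends c w
  proof (rule multigraph.GHZ_dim_le_3_at_vertex_of_degree_3[OF _ ghz v(1) abd(2-4) abd(1)])
    show "multigraph V Ed ends" using multigraph_of_skeleton[OF assms(1) skeleton] .
    show "ends e \<in> {{v,a}, {v,b}, {v,d}}" if "e \<in> Ed" "v \<in> ends e" for e
    proof -
      have "ends e \<in> {x \<in> E. v \<in> x}" using that skeleton by (simp add: multigraph_with_skeleton_def)
      then show ?thesis using edges_at_v by simp
    qed
  qed
  then show ?thesis
    unfolding matching_index_def by (intro Sup_least) (auto simp: numeral_eq_enat)
qed

end
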